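(* Let $p\ge 2$ be an integer and $\omega\ge1$ real, and let $k=\lfloor\log_p((p-1)\omega+1)\rfloor-1$. Then the minimal real resolution of $\omega$ is $$\widetilde\gamma_i(\omega)=p^{-i}\,\frac{p-1}{p-p^{-k}}\,\omega\quad(0\le i\le k),\qquad \widetilde\gamma_i(\omega)=0\quad(i>k).$$
   Context: A real resolution of $\omega$ is a sequence $(\gamma_i)_{i\ge0}$ with values in $\{0\}\cup[1,\infty)$ such that $\gamma_i\ge p\gamma_{i+1}$ for all $i$ and $\sum_{i\ge0}\gamma_i=\omega$. The minimal real resolution $(\widetilde\gamma_i(\omega))_{i\ge0}$ is the lexicographically smallest real resolution of $\omega$ (compared at the first index where two sequences differ). *)

theory Defs
  imports "HOL-Analysis.Analysis"
begin

definition real_resolution :: "real \<Rightarrow> real \<Rightarrow> (nat \<Rightarrow> real) \<Rightarrow> bool" where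
  "real_resolution p \<omega> \<gamma> \<longleftrightarrow>
     (\<forall>i. \<gamma> i = 0 \<or> \<gamma> i \<ge> 1) \<and> (\<forall>i. \<gamma> i \<ge> p * \<gamma> (Suc i)) \<and> \<gamma> sums \<omega>"

definition lex_less :: "(nat \<Rightarrow> real) \<Rightarrow> (nat \<Rightarrow> real) \<Rightarrow> bool" where
  "lex_less \<gamma> \<delta> \<longleftrightarrow> (\<exists>n. (\<forall>i<n. \<gamma> i = \<delta> i) \<and> \<gamma> n < \<delta> n)"

definition min_real_resolution :: "real \<Rightarrow> real \<Rightarrow> nat \<Rightarrow> real" where
  "min_real_resolution p \<omega> = (THE \<gamma>. real_resolution p \<omega> \<gamma> \<and>
      (\<forall>\<delta>. real_resolution p \<omega> \<delta> \<longrightarrow> \<delta> = \<gamma> \<or> lex_less \<gamma> \<delta>))"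

end

theory Submission
  imports Defs
begin

text \<open>Since \<open>\<gamma>\<^sub>i \<ge> p\<gamma>\<^sub>i\<^sub>+\<^sub>1\<close>, every real resolution satisfies \<open>\<gamma>\<^sub>i \<le> \<gamma>\<^sub>0 p\<^sup>-\<^sup>i\<close>, and its last
  nonzero entry \<open>\<gamma>\<^sub>m \<ge> 1\<close> forces \<open>\<gamma>\<^sub>i \<ge> p\<^sup>m\<^sup>-\<^sup>i\<close>, hence \<open>\<omega> \<ge> 1 + p + \<dots> + p\<^sup>m\<close> and \<open>m \<le> k\<close>.
  Therefore \<open>\<omega> \<le> \<gamma>\<^sub>0 (1 + p\<^sup>-\<^sup>1 + \<dots> + p\<^sup>-\<^sup>k)\<close>, with equality only for the geometric
  sequence \<open>\<gamma>\<^sub>i = \<gamma>\<^sub>0 p\<^sup>-\<^sup>i\<close> (\<open>i \<le> k\<close>). The geometric sequence with the smallest admissible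
  \<open>\<gamma>\<^sub>0\<close> is a real resolution because \<open>p\<^sup>k\<^sup>+\<^sup>1 \<le> (p-1)\<omega> + 1\<close>, so it is the lexicographic
  minimum: any other resolution has a strictly larger first entry.\<close>

definition geometric_weight :: "real \<Rightarrow> nat \<Rightarrow> real" where
  "geometric_weight P K = (\<Sum>i\<le>K. 1 / P^i)"

definition geometric_resolution :: "real \<Rightarrow> nat \<Rightarrow> real \<Rightarrow> nat \<Rightarrow> real" where
  "geometric_resolution P K c = (\<lambda>i. if i \<le> K then c / P^i else 0)"

lemma geometric_weight_pos: "P > 0 \<Longrightarrow> geometric_weight P K > 0"
  unfolding geometric_weight_def by (intro sum_pos) auto

lemma geometric_weight_times_pred: "P \<noteq> 0 \<Longrightarrow> (P - 1) * geometric_weight P K = P - 1 / P^K"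
proof (induction K)
  case (Suc K)
  have "(P - 1) * geometric_weight P (Suc K) = (P - 1) * geometric_weight P K + (P - 1) / P^Suc K"
    by (simp add: geometric_weight_def algebra_simps)
  also have "\<dots> = P - 1 / P^K + (P - 1) / P^Suc K" using Suc by simp
  also have "\<dots> = P - 1 / P^Suc K" using Suc.prems by (simp add: field_simps)
  finally show ?case .
qed (simp add: geometric_weight_def)

lemma power_mult_geometric_weight_le_iff:
  assumes "P > 1"
  shows "P^K * geometric_weight P K \<le> w \<longleftrightarrow> P^Suc K \<le> (P - 1) * w + 1"
proof -
  have "(P - 1) * (P^K * geometric_weight P K) = P^K * ((P - 1) * geometric_weight P K)"
    by (simp add: ac_simps)
  also have "\<dots> = P^Suc K - 1"
    using assms by (simp add: geometric_weight_times_pred right_diff_distrib)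
  finally have "(P - 1) * (P^K * geometric_weight P K) = P^Suc K - 1" .
  then show ?thesis
    using assms mult_le_cancel_left_pos[of "P - 1" "P^K * geometric_weight P K" w] by argo
qed

lemma sums_eq_sum_atMost:
  fixes f :: "nat \<Rightarrow> 'a::{t2_space, comm_monoid_add}"
  assumes "f sums s" and "\<forall>i>n. f i = 0"
  shows "s = (\<Sum>i\<le>n. f i)"
proof -
  have "f sums (\<Sum>i\<le>n. f i)"
    by (rule sums_finite) (simp_all add: assms(2) not_le)
  with assms(1) show ?thesis by (rule sums_unique2)
qed

lemma real_resolutionD:
  assumes "real_resolution P w d"
  shows "d i = 0 \<or> d i \<ge> 1" and "P * d (Suc i) \<le> d i" and "d sums w"
  using assms unfolding real_resolution_def by blast+

lemma real_resolution_le_first_div_power: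
  assumes "real_resolution P w d" and "P > 1"
  shows "d i \<le> d 0 / P^i"
proof (induction i)
  case (Suc i)
  have "P * d (Suc i) \<le> d i" by (rule real_resolutionD(2)[OF assms(1)])
  also have "\<dots> \<le> d 0 / P^i" by (fact Suc)
  finally show ?case using assms(2) by (simp add: field_simps)
qed simp

lemma real_resolution_power_le:
  assumes "real_resolution P w d" and "P > 1" and "d (i + j) \<ge> 1"
  shows "P^j \<le> d i"
  using assms(3)
proof (induction j arbitrary: i)
  case (Suc j)
  then have "P^j \<le> d (Suc i)" by simp
  then have "P^Suc j \<le> P * d (Suc i)" using assms(2) by simp
  also have "\<dots> \<le> d i" by (rule real_resolutionD(2)[OF assms(1)])
  finally show ?case .
qed simp

lemma real_resolution_finite_support:
  assumes "real_resolution P w d" and "P > 1" and "w > 0"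
  obtains m where "d m \<ge> 1" and "\<forall>i>m. d i = 0"
proof -
  obtain N where N: "d 0 < P^N" using real_arch_pow assms(2) by blast
  have small: "d i = 0" if "i \<ge> N" for i
  proof -
    have "d 0 < P^i" using N power_increasing[OF that, of P] assms(2) by linarith
    then have "d 0 / P^i < 1" using assms(2) by (simp add: divide_less_eq)
    then have "d i < 1" using real_resolution_le_first_div_power[OF assms(1,2), of i] by linarith
    then show ?thesis using real_resolutionD(1)[OF assms(1), of i] by linarith
  qed
  define Z where "Z = {i. d i \<noteq> 0}"
  have "Z \<subseteq> {..<N}" using small unfolding Z_def by (auto simp: not_less[symmetric])
  then have "finite Z" by (rule finite_subset) simp
  have "Z \<noteq> {}"
  proof
    assume "Z = {}"
    then have "d = (\<lambda>_. 0)" unfolding Z_def by auto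
    then have "(\<lambda>_. 0) sums w" using real_resolutionD(3)[OF assms(1)] by simp
    then have "w = 0" by (rule sums_unique2[OF _ sums_zero])
    then show False using assms(3) by simp
  qed
  have "d (Max Z) \<noteq> 0" using Max_in[OF \<open>finite Z\<close> \<open>Z \<noteq> {}\<close>] unfolding Z_def by simp
  then have "d (Max Z) \<ge> 1" using real_resolutionD(1)[OF assms(1)] by blast
  moreover have "\<forall>i>Max Z. d i = 0"
    using Max_ge[OF \<open>finite Z\<close>] unfolding Z_def by (auto simp: not_le[symmetric])
  ultimately show ?thesis by (rule that)
qed

lemma real_resolution_vanishes_beyond:
  assumes res: "real_resolution P w d" and P: "P > 1" and w: "w > 0"
    and K: "(P - 1) * w + 1 < P^(K + 2)"
  shows "\<forall>i>K. d i = 0"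
proof -
  obtain m where m1: "d m \<ge> 1" and m0: "\<forall>i>m. d i = 0"
    using real_resolution_finite_support[OF res P w] .
  have "P^m * geometric_weight P m = (\<Sum>i\<le>m. P^(m - i))"
    unfolding geometric_weight_def sum_distrib_left
    using P by (intro sum.cong) (auto simp: power_diff)
  also have "\<dots> \<le> (\<Sum>i\<le>m. d i)"
    using real_resolution_power_le[OF res P] m1 by (intro sum_mono) simp
  also have "\<dots> = w"
    using sums_eq_sum_atMost[OF real_resolutionD(3)[OF res] m0] by simp
  finally have "P^Suc m \<le> (P - 1) * w + 1"
    using power_mult_geometric_weight_le_iff[OF P] by blast
  then have "P^Suc m < P^(K + 2)" using K by linarith
  then have "m \<le> K" using power_strict_increasing_iff[OF P, of "Suc m" "K + 2"] by simp
  then show ?thesis using m0 by simp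
qed

lemma real_resolution_eq_sum_atMost:
  assumes "real_resolution P w d" and "P > 1" and "w > 0"
    and "(P - 1) * w + 1 < P^(K + 2)"
  shows "w = (\<Sum>i\<le>K. d i)"
proof (rule sums_eq_sum_atMost)
  show "d sums w" by (rule real_resolutionD(3)[OF assms(1)])
  show "\<forall>i>K. d i = 0" by (fact real_resolution_vanishes_beyond[OF assms])
qed

lemma real_resolution_le_first_times_weight:
  assumes "real_resolution P w d" and "P > 1" and "w > 0"
    and "(P - 1) * w + 1 < P^(K + 2)"
  shows "w \<le> d 0 * geometric_weight P K"
proof -
  have "w = (\<Sum>i\<le>K. d i)" using real_resolution_eq_sum_atMost[OF assms] .
  also have "\<dots> \<le> (\<Sum>i\<le>K. d 0 * (1 / P^i))"
    using real_resolution_le_first_div_power[OF assms(1,2)] by (intro sum_mono) simp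
  finally show ?thesis by (simp add: geometric_weight_def sum_distrib_left)
qed

lemma real_resolution_eq_geometric_resolution:
  assumes res: "real_resolution P w d" and P: "P > 1" and w: "w > 0"
    and K: "(P - 1) * w + 1 < P^(K + 2)"
    and eq: "d 0 * geometric_weight P K = w"
  shows "d = geometric_resolution P K (d 0)"
proof
  fix i
  have "(\<Sum>i\<le>K. d 0 / P^i - d i) = d 0 * geometric_weight P K - (\<Sum>i\<le>K. d i)"
    by (simp add: geometric_weight_def sum_subtractf sum_distrib_left)
  also have "\<dots> = 0" using eq real_resolution_eq_sum_atMost[OF res P w K] by simp
  finally have "\<forall>i\<le>K. d 0 / P^i - d i = 0"
    using real_resolution_le_first_div_power[OF res P]
    by (subst (asm) sum_nonneg_eq_0_iff) auto
  moreover have "\<forall>i>K. d i = 0" by (fact real_resolution_vanishes_beyond[OF res P w K])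
  ultimately show "d i = geometric_resolution P K (d 0) i"
    unfolding geometric_resolution_def by (auto simp: not_le)
qed

lemma real_resolution_geometric_resolution:
  assumes "P > 1" and "P^K \<le> c"
  shows "real_resolution P (c * geometric_weight P K) (geometric_resolution P K c)"
  unfolding real_resolution_def
proof (intro conjI allI)
  fix i
  have "c \<ge> 0" using assms zero_less_power[of P K] by linarith
  show "geometric_resolution P K c i = 0 \<or> geometric_resolution P K c i \<ge> 1"
  proof (cases "i \<le> K")
    case True
    then have "P^i \<le> c" using assms power_increasing[of i K P] by linarith
    then show ?thesis using True assms(1) by (simp add: geometric_resolution_def)
  qed (simp add: geometric_resolution_def)
  show "P * geometric_resolution P K c (Suc i) \<le> geometric_resolution P K c i"
    using assms(1) \<open>c \<ge> 0\<close> by (simp add: geometric_resolution_def)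
next
  have "geometric_resolution P K c sums (\<Sum>i\<le>K. geometric_resolution P K c i)"
    by (rule sums_finite) (auto simp: geometric_resolution_def)
  then show "geometric_resolution P K c sums (c * geometric_weight P K)"
    by (simp add: geometric_resolution_def geometric_weight_def sum_distrib_left)
qed

lemma min_real_resolutionI:
  assumes "real_resolution P w g"
    and "\<And>\<delta>. real_resolution P w \<delta> \<Longrightarrow> g 0 \<le> \<delta> 0"
    and "\<And>\<delta>. real_resolution P w \<delta> \<Longrightarrow> \<delta> 0 = g 0 \<Longrightarrow> \<delta> = g"
  shows "min_real_resolution P w = g"
  unfolding min_real_resolution_def
proof (rule the_equality)
  have "\<delta> = g \<or> lex_less g \<delta>" if "real_resolution P w \<delta>" for \<delta>
    using assms(2,3)[OF that] unfolding lex_less_def by force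
  then show "real_resolution P w g \<and> (\<forall>\<delta>. real_resolution P w \<delta> \<longrightarrow> \<delta> = g \<or> lex_less g \<delta>)"
    using assms(1) by blast
next
  fix \<gamma>
  assume \<gamma>: "real_resolution P w \<gamma> \<and> (\<forall>\<delta>. real_resolution P w \<delta> \<longrightarrow> \<delta> = \<gamma> \<or> lex_less \<gamma> \<delta>)"
  have "\<not> lex_less \<gamma> g"
  proof
    assume "lex_less \<gamma> g"
    then obtain n where "\<forall>i<n. \<gamma> i = g i" and "\<gamma> n < g n" unfolding lex_less_def by blast
    then show False
      using assms(2,3) \<gamma> by (cases n) force+
  qed
  then show "\<gamma> = g" using \<gamma> assms(1) by blast
qed

lemma min_real_resolution_eq_geometric_resolution:
  assumes P: "P > 1" and w: "w > 0"
    and lower: "P^Suc K \<le> (P - 1) * w + 1" and upper: "(P - 1) * w + 1 < P^(K + 2)"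
  shows "min_real_resolution P w = geometric_resolution P K (w / geometric_weight P K)"
proof (rule min_real_resolutionI)
  define c where "c = w / geometric_weight P K"
  have weight: "c * geometric_weight P K = w"
    using geometric_weight_pos[of P K] P unfolding c_def by simp
  then have "P^K * geometric_weight P K \<le> c * geometric_weight P K"
    using power_mult_geometric_weight_le_iff[OF P] lower by simp
  then have "P^K \<le> c" using geometric_weight_pos[of P K] P by simp
  then show "real_resolution P w (geometric_resolution P K c)"
    using real_resolution_geometric_resolution[OF P] weight by metis
  fix \<delta> assume \<delta>: "real_resolution P w \<delta>"
  have "w \<le> \<delta> 0 * geometric_weight P K"
    by (rule real_resolution_le_first_times_weight[OF \<delta> P w upper])
  then show "geometric_resolution P K c 0 \<le> \<delta> 0"
    using geometric_weight_pos[of P K] P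
    by (simp add: geometric_resolution_def c_def pos_divide_le_eq)
  assume "\<delta> 0 = geometric_resolution P K c 0"
  then have "\<delta> 0 = c" by (simp add: geometric_resolution_def)
  then show "\<delta> = geometric_resolution P K c"
    using real_resolution_eq_geometric_resolution[OF \<delta> P w upper] weight by simp
qed

lemma floor_log_pred_eq_nat:
  assumes P: "P > 1" and X: "P \<le> X"
  obtains K :: nat where "\<lfloor>log P X\<rfloor> - 1 = int K" and "P^Suc K \<le> X" and "X < P^(K + 2)"
proof
  define K where "K = nat (\<lfloor>log P X\<rfloor> - 1)"
  have "1 \<le> log P X" using P X by simp
  then show floor: "\<lfloor>log P X\<rfloor> - 1 = int K" unfolding K_def by linarith
  have "P powr real (Suc K) \<le> X \<and> X < P powr real (K + 2)"
    using floor_log_eq_powr_iff[of X P "int (Suc K)"] floor P X by simp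
  moreover have "P powr real (Suc K) = P^Suc K" and "P powr real (K + 2) = P^(K + 2)"
    using P by (simp_all only: powr_realpow)
  ultimately show "P^Suc K \<le> X" and "X < P^(K + 2)" by simp_all
qed

theorem mainTheorem7:
  fixes p :: nat and \<omega> :: real
  assumes "p \<ge> 2" and "\<omega> \<ge> 1"
  defines "k \<equiv> \<lfloor>log (real p) ((real p - 1) * \<omega> + 1)\<rfloor> - 1"
  shows "\<forall>i::nat. min_real_resolution (real p) \<omega> i =
           (if int i \<le> k
            then (real p) powi (- int i) * ((real p - 1) / (real p - (real p) powi (- k))) * \<omega>
            else 0)"
proof -
  define P where "P = real p"
  have P: "P > 1" using assms(1) unfolding P_def by simp
  have "(P - 1) * 1 \<le> (P - 1) * \<omega>" using P assms(2) by (intro mult_left_mono) auto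
  then have "P \<le> (P - 1) * \<omega> + 1" by simp
  then obtain K where kK: "k = int K"
    and lower: "P^Suc K \<le> (P - 1) * \<omega> + 1" and upper: "(P - 1) * \<omega> + 1 < P^(K + 2)"
    using floor_log_pred_eq_nat[OF P] unfolding k_def P_def by blast
  have min: "min_real_resolution P \<omega> = geometric_resolution P K (\<omega> / geometric_weight P K)"
    using min_real_resolution_eq_geometric_resolution[OF P _ lower upper] assms(2) by simp
  have weight: "geometric_weight P K = (P - P powi (- int K)) / (P - 1)"
    using geometric_weight_times_pred[of P K] P by (simp add: power_int_minus_divide field_simps)
  show ?thesis
    unfolding P_def[symmetric] min kK geometric_resolution_def weight
    by (simp add: power_int_minus_divide ac_simps)
qed

end
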